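(* Let $N\ge c\geq 2$ and let $\Gamma$ be the $c$-complete hypergraph on $N$ vertices. Then the spectrum of its (signless) normalized Laplacian is given by $\frac{N-c}{N-1}$, with multiplicity $N-1$, and $c$, with multiplicity $1$.
   Context: A hypergraph $\Gamma=(\mathcal{V},\mathcal{H})$ has a finite vertex set $\mathcal{V}=\{v_1,\ldots,v_N\}$ and a set $\mathcal{H}$ of nonempty subsets of $\mathcal{V}$ (hyperedges). $\deg(v)$ is the number of hyperedges containing $v$, $D$ the diagonal degree matrix, $A$ the matrix with $A_{ii}=0$ and $A_{ij}=-\#\{h\in\mathcal{H}: v_i,v_j\in h\}$ for $i\ne j$, and the (signless) normalized Laplacian is $L=\mathrm{Id}-D^{-1}A$. The $c$-complete hypergraph on $N$ vertices is the hypergraph whose hyperedges are all $\binom{N}{c}$ subsets of $\mathcal{V}$ of cardinality $c$. *)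

theory Defs
  imports "Jordan_Normal_Form.Char_Poly"
begin

text \<open>A hypergraph on the vertex set {0..<N} (vertex v_i is index i) with
 hyperedge set H, a set of nonempty subsets of {0..<N}.\<close>

definition hdeg :: "nat set set \<Rightarrow> nat \<Rightarrow> nat" where
  "hdeg H i = card {h \<in> H. i \<in> h}"

definition hdeg_mat :: "nat \<Rightarrow> nat set set \<Rightarrow> real mat" where
  "hdeg_mat N H = mat N N (\<lambda>(i,j). if i = j then real (hdeg H i) else 0)"

definition hadj_mat :: "nat \<Rightarrow> nat set set \<Rightarrow> real mat" where
  "hadj_mat N H = mat N N (\<lambda>(i,j). if i = j then 0
       else - real (card {h \<in> H. i \<in> h \<and> j \<in> h}))"

definition hlaplacian :: "nat \<Rightarrow> nat set set \<Rightarrow> real mat" where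
  "hlaplacian N H = 1\<^sub>m N - (mat N N (\<lambda>(i,j). if i = j then 1 / real (hdeg H i) else 0)) * hadj_mat N H"

definition complete_hyperedges :: "nat \<Rightarrow> nat \<Rightarrow> nat set set" where
  "complete_hyperedges N c = {S. S \<subseteq> {0..<N} \<and> card S = c}"

end

theory Submission imports Defs begin

text \<open>Every vertex of the \<open>c\<close>-complete hypergraph lies in \<open>(N-1 choose c-1)\<close> hyperedges and every
  pair of distinct vertices in \<open>(N-2 choose c-2)\<close>, whose ratio is \<open>t = (c-1)/(N-1)\<close>. Hence the
  Laplacian has diagonal \<open>1\<close> and constant off-diagonal entries \<open>t\<close>, i.e. it is \<open>(1-t) I + t J\<close>
  with \<open>J\<close> the all-ones matrix. Conjugating by the shear matrix whose first column is all ones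
  makes it upper triangular with diagonal \<open>1 + (N-1) t = c\<close>, \<open>1 - t, ..., 1 - t\<close>.\<close>

definition shear_mat :: "nat \<Rightarrow> 'a::comm_ring_1 \<Rightarrow> 'a mat" where
  "shear_mat n s = mat n n (\<lambda>(i,j). if i = j then 1 else if j = 0 then s else 0)"

lemma shear_mat_carrier [simp]: "shear_mat n s \<in> carrier_mat n n"
  by (simp add: shear_mat_def)

lemma dim_shear_mat [simp]: "dim_row (shear_mat n s) = n" "dim_col (shear_mat n s) = n"
  by (simp_all add: shear_mat_def)

lemma shear_mat_index:
  "i < n \<Longrightarrow> j < n \<Longrightarrow> shear_mat n s $$ (i,j) = (if i = j then 1 else if j = 0 then s else 0)"
  by (simp add: shear_mat_def)

lemma shear_mat_mult_index:
  assumes A: "A \<in> carrier_mat n m" and "i < n" "j < m"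
  shows "(shear_mat n s * A) $$ (i,j) = A $$ (i,j) + (if i = 0 then 0 else s * A $$ (0,j))"
proof -
  have "(shear_mat n s * A) $$ (i,j) = (\<Sum>k\<in>{0..<n}. shear_mat n s $$ (i,k) * A $$ (k,j))"
    using assms by (simp add: scalar_prod_def carrier_matD)
  also have "\<dots> = (\<Sum>k\<in>{i,0}. shear_mat n s $$ (i,k) * A $$ (k,j))"
    by (rule sum.mono_neutral_right) (use assms in \<open>auto simp: shear_mat_def\<close>)
  also have "\<dots> = A $$ (i,j) + (if i = 0 then 0 else s * A $$ (0,j))"
    using assms by (auto simp: shear_mat_def)
  finally show ?thesis .
qed

lemma mult_shear_mat_index:
  assumes A: "A \<in> carrier_mat m n" and "i < m" "j < n"
  shows "(A * shear_mat n s) $$ (i,j) =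
    (if j = 0 then A $$ (i,0) + s * (\<Sum>k\<in>{1..<n}. A $$ (i,k)) else A $$ (i,j))"
proof -
  have "(A * shear_mat n s) $$ (i,j) = (\<Sum>k\<in>{0..<n}. A $$ (i,k) * shear_mat n s $$ (k,j))"
    using assms by (simp add: scalar_prod_def carrier_matD)
  also have "\<dots> = (if j = 0 then A $$ (i,0) + s * (\<Sum>k\<in>{1..<n}. A $$ (i,k)) else A $$ (i,j))"
  proof (cases "j = 0")
    case True
    have "{0..<n} = insert 0 {1..<n}" using assms by auto
    then show ?thesis
      using True assms by (simp add: shear_mat_index sum_distrib_left mult.commute)
  next
    case False
    then show ?thesis
      using assms by (simp add: shear_mat_index if_distrib[of "\<lambda>x. _ * x"] cong: if_cong)
  qed
  finally show ?thesis .
qed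

lemma shear_mat_zero: "shear_mat n 0 = 1\<^sub>m n"
  by (rule eq_matI) (auto simp: shear_mat_def)

lemma shear_mat_mult_shear_mat: "shear_mat n s * shear_mat n s' = shear_mat n (s + s')"
proof (rule eq_matI)
  fix i j assume "i < dim_row (shear_mat n (s + s'))" "j < dim_col (shear_mat n (s + s'))"
  then show "(shear_mat n s * shear_mat n s') $$ (i, j) = shear_mat n (s + s') $$ (i, j)"
    by (subst shear_mat_mult_index[OF shear_mat_carrier]) (auto simp: shear_mat_index)
qed simp_all

lemma char_poly_const_diag_const_offdiag:
  fixes a t :: "'a::comm_ring_1"
  assumes "n \<ge> 1"
  shows "char_poly (mat n n (\<lambda>(i,j). if i = j then a else t)) =
    [:-(a - t), 1:] ^ (n - 1) * [:-(a + of_nat (n - 1) * t), 1:]"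
proof -
  define M where "M = mat n n (\<lambda>(i,j). if i = j then a else t)"
  define B where "B = mat n n (\<lambda>(i,j).
    if i = 0 then (if j = 0 then a + of_nat (n - 1) * t else t) else if i = j then a - t else 0)"
  have M: "M \<in> carrier_mat n n" and B: "B \<in> carrier_mat n n"
    by (simp_all add: M_def B_def)
  have row_sum: "M $$ (i,0) + (\<Sum>k\<in>{1..<n}. M $$ (i,k)) = a + of_nat (n - 1) * t" if "i < n" for i
  proof -
    have "M $$ (i,0) + (\<Sum>k\<in>{1..<n}. M $$ (i,k)) = (\<Sum>k\<in>{0..<n}. M $$ (i,k))"
      using assms by (simp add: sum.atLeast_Suc_lessThan)
    also have "\<dots> = M $$ (i,i) + (\<Sum>k\<in>{0..<n} - {i}. M $$ (i,k))"
      using that by (simp add: sum.remove)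
    also have "\<dots> = a + of_nat (n - 1) * t"
      using that by (simp add: M_def)
    finally show ?thesis .
  qed
  have MP: "M * shear_mat n 1 = shear_mat n 1 * B"
  proof (rule eq_matI)
    fix i j assume "i < dim_row (shear_mat n 1 * B)" "j < dim_col (shear_mat n 1 * B)"
    then have ij: "i < n" "j < n" using B by auto
    show "(M * shear_mat n 1) $$ (i,j) = (shear_mat n 1 * B) $$ (i,j)"
      using ij row_sum[OF ij(1)]
      by (simp add: mult_shear_mat_index[OF M] shear_mat_mult_index[OF B]) (auto simp: M_def B_def)
  qed (use M B in auto)
  have "M = M * (shear_mat n 1 * shear_mat n (-1))"
    using M by (simp add: shear_mat_mult_shear_mat shear_mat_zero)
  also have "\<dots> = shear_mat n 1 * B * shear_mat n (-1)"
    by (simp add: assoc_mult_mat[symmetric, OF M shear_mat_carrier shear_mat_carrier] MP)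
  finally have "similar_mat M B"
    by (intro similar_matI[where n = n and P = "shear_mat n 1" and Q = "shear_mat n (-1)"])
      (use M B in \<open>simp_all add: shear_mat_mult_shear_mat shear_mat_zero\<close>)
  then have "char_poly M = char_poly B"
    by (rule char_poly_similar)
  also have "\<dots> = (\<Prod>x\<leftarrow>diag_mat B. [:-x, 1:])"
    by (rule char_poly_upper_triangular[OF B]) (auto simp: upper_triangular_def B_def)
  also have "diag_mat B = (a + of_nat (n - 1) * t) # replicate (n - 1) (a - t)"
    using assms by (auto simp: diag_mat_def B_def upt_conv_Cons intro!: replicate_eqI)
  finally show ?thesis
    by (simp add: M_def mult.commute)
qed

lemma card_supersets_of_card:
  fixes A X :: "'a set"
  assumes A: "finite A" and XA: "X \<subseteq> A" and Xk: "card X \<le> k"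
  shows "card {S. S \<subseteq> A \<and> card S = k \<and> X \<subseteq> S} = (card A - card X) choose (k - card X)"
proof -
  have X: "finite X" using A XA finite_subset by blast
  have "bij_betw (\<lambda>T. T \<union> X) {T. T \<subseteq> A - X \<and> card T = k - card X}
      {S. S \<subseteq> A \<and> card S = k \<and> X \<subseteq> S}"
  proof (rule bij_betw_byWitness[where f' = "\<lambda>S. S - X"])
    show "(\<lambda>T. T \<union> X) ` {T. T \<subseteq> A - X \<and> card T = k - card X} \<subseteq> {S. S \<subseteq> A \<and> card S = k \<and> X \<subseteq> S}"
    proof safe
      fix T assume T: "T \<subseteq> A - X" "card T = k - card X"
      then have "finite T"
        using A by (meson Diff_subset finite_subset subset_trans)
      with T X Xk show "card (T \<union> X) = k"
        by (subst card_Un_disjoint) auto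
    qed (use XA in auto)
    show "(\<lambda>S. S - X) ` {S. S \<subseteq> A \<and> card S = k \<and> X \<subseteq> S} \<subseteq> {T. T \<subseteq> A - X \<and> card T = k - card X}"
      using X by (auto simp: card_Diff_subset)
  qed auto
  then have "card {S. S \<subseteq> A \<and> card S = k \<and> X \<subseteq> S} = card {T. T \<subseteq> A - X \<and> card T = k - card X}"
    by (simp add: bij_betw_same_card)
  also have "\<dots> = (card A - card X) choose (k - card X)"
    using A X XA by (simp add: n_subsets card_Diff_subset)
  finally show ?thesis .
qed

lemma binomial_minus1_ratio:
  assumes "1 \<le> k" "k \<le> n"
  shows "real ((n - 1) choose (k - 1)) / real (n choose k) = real k / real n"
proof -
  have "k * (n choose k) = n * ((n - 1) choose (k - 1))"
    using assms by (simp add: times_binomial_minus1_eq)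
  then have "real k * real (n choose k) = real n * real ((n - 1) choose (k - 1))"
    by (simp flip: of_nat_mult)
  moreover have "real (n choose k) > 0" "real n > 0"
    using assms by auto
  ultimately show ?thesis
    by (simp add: field_simps)
qed

lemma hlaplacian_index:
  assumes "i < N" "j < N"
  shows "hlaplacian N H $$ (i,j) =
    (if i = j then 1 else real (card {h \<in> H. i \<in> h \<and> j \<in> h}) / real (hdeg H i))"
proof -
  define D where "D = mat N N (\<lambda>(i,j). if i = j then 1 / real (hdeg H i) else 0)"
  have "(D * hadj_mat N H) $$ (i,j) = (\<Sum>k\<in>{0..<N}. D $$ (i,k) * hadj_mat N H $$ (k,j))"
    using assms by (simp add: scalar_prod_def D_def hadj_mat_def)
  also have "\<dots> = (\<Sum>k\<in>{i}. D $$ (i,k) * hadj_mat N H $$ (k,j))"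
    by (rule sum.mono_neutral_right) (use assms in \<open>auto simp: D_def\<close>)
  finally have "(D * hadj_mat N H) $$ (i,j) = D $$ (i,i) * hadj_mat N H $$ (i,j)"
    by simp
  then show ?thesis
    using assms by (simp add: hlaplacian_def hadj_mat_def D_def)
qed

lemma hdeg_complete_hyperedges:
  assumes "1 \<le> c" "i < N"
  shows "hdeg (complete_hyperedges N c) i = (N - 1) choose (c - 1)"
proof -
  have "hdeg (complete_hyperedges N c) i = card {S. S \<subseteq> {0..<N} \<and> card S = c \<and> {i} \<subseteq> S}"
    unfolding hdeg_def complete_hyperedges_def by (rule arg_cong[where f = card]) auto
  also have "\<dots> = (N - 1) choose (c - 1)"
    using assms by (subst card_supersets_of_card) auto
  finally show ?thesis .
qed

lemma codegree_complete_hyperedges: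
  assumes "2 \<le> c" "i < N" "j < N" "i \<noteq> j"
  shows "card {h \<in> complete_hyperedges N c. i \<in> h \<and> j \<in> h} = (N - 2) choose (c - 2)"
proof -
  have "card {h \<in> complete_hyperedges N c. i \<in> h \<and> j \<in> h}
      = card {S. S \<subseteq> {0..<N} \<and> card S = c \<and> {i,j} \<subseteq> S}"
    unfolding complete_hyperedges_def by (rule arg_cong[where f = card]) auto
  also have "\<dots> = (N - 2) choose (c - 2)"
    using assms by (subst card_supersets_of_card) (auto simp: numeral_2_eq_2)
  finally show ?thesis .
qed

lemma hlaplacian_complete_hyperedges:
  assumes "2 \<le> c" "c \<le> N"
  shows "hlaplacian N (complete_hyperedges N c) =
    mat N N (\<lambda>(i,j). if i = j then 1 else real (c - 1) / real (N - 1))"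
proof (rule eq_matI)
  fix i j assume "i < dim_row (mat N N (\<lambda>(i,j). if i = j then 1 else real (c - 1) / real (N - 1)))"
    "j < dim_col (mat N N (\<lambda>(i,j). if i = j then 1 else real (c - 1) / real (N - 1)))"
  then have ij: "i < N" "j < N" by auto
  have "real ((N - 2) choose (c - 2)) / real ((N - 1) choose (c - 1)) = real (c - 1) / real (N - 1)"
    using binomial_minus1_ratio[of "c - 1" "N - 1"] assms by (simp add: numeral_2_eq_2)
  then show "hlaplacian N (complete_hyperedges N c) $$ (i,j) =
      mat N N (\<lambda>(i,j). if i = j then 1 else real (c - 1) / real (N - 1)) $$ (i,j)"
    using ij assms
    by (simp add: hlaplacian_index hdeg_complete_hyperedges codegree_complete_hyperedges)
qed (simp_all add: hlaplacian_def hadj_mat_def)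

theorem mainTheorem8:
  fixes N c :: nat
  assumes "2 \<le> c" and "c \<le> N"
  shows "char_poly (hlaplacian N (complete_hyperedges N c)) =
           [: - (real (N - c) / real (N - 1)), 1 :] ^ (N - 1) * [: - real c, 1 :]"
proof -
  define t where "t = real (c - 1) / real (N - 1)"
  have "real (N - 1) > 0"
    using assms by simp
  then have "1 - t = real (N - c) / real (N - 1)" and "1 + of_nat (N - 1) * t = real c"
    using assms by (simp_all add: t_def field_simps of_nat_diff)
  moreover have "char_poly (hlaplacian N (complete_hyperedges N c)) =
      [:-(1 - t), 1:] ^ (N - 1) * [:-(1 + of_nat (N - 1) * t), 1:]"
    unfolding hlaplacian_complete_hyperedges[OF assms] t_def
    using assms by (intro char_poly_const_diag_const_offdiag) simp
  ultimately show ?thesis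
    by simp
qed

end
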